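(* Let $\mathbb{W}$ be a subgroup of the finite group $\mathbb{W}_1$ that contains the group $\mathbb{W}_1^{\mathfrak{A}}$, and let $G$ be a $\mathbb{W}$-invariant finite subgroup of $\mathbb{T}_1$. Then there exists $n\in\mathbb{N}$ such that one of the following five possibilities holds: \begin{enumerate} \item $G\cong\mu_n^3$; \item $n$ is even and $G\cong\mu_{n}^2\times\mu_{\frac{n}{2}}$; \item $n$ is even and $G\cong\mu_{n}\times\mu_{\frac{n}{2}}^2$; \item $n$ is divisible by $4$ and $G\cong\mu_{n}\times\mu_{\frac{n}{2}}\times\mu_{\frac{n}{4}}$; \item $n$ is divisible by $4$ and $G\cong\mu_{n}\times\mu_{\frac{n}{4}}^2$. \end{enumerate} Here $\mu_k$ denotes the cyclic group of order $k$.
   Context: $M_1=\mathbb{Z}^4/\langle h_1+h_2+h_3+h_4\rangle$, with basis $e_1,e_2,e_3$ the classes of $h_1,h_2,h_3$. The group $\mathfrak{S}_4\times\mu_2$ acts on $M_1$: $\mathfrak{S}_4$ permutes the $h_i$ (so $g(e_i)=e_{g(i)}$ if $g(i)\ne4$ and $-e_1-e_2-e_3$ otherwise) and the generator $\sigma$ of $\mu_2$ acts as $-\mathrm{id}$; the image in $\mathrm{GL}(M_1)\cong\mathrm{GL}_3(\mathbb{Z})$ is denoted $\mathbb{W}_1$, and $\mathbb{W}_1^{\mathfrak{A}}$ is its unique subgroup isomorphic to $\mathfrak{A}_4$ (image of $\mathfrak{A}_4\times\{1\}$). $\mathbb{T}_1=\mathrm{Spec}\,\mathbb{C}[M_1]\cong\mathbb{G}_m^3$,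 on which $\mathrm{GL}(M_1)$ acts by group automorphisms via its action on characters. *)

theory Defs
  imports "HOL-Algebra.Elementary_Groups" "HOL-Combinatorics.Permutations" "Jordan_Normal_Form.Matrix"
begin

text \<open>Elements of M_1 are integer vectors of dimension 3 w.r.t. the basis e_1,e_2,e_3
  (classes of h_1,h_2,h_3).  Indices are shifted to 0,1,2; h_4 has index 3.\<close>

definition hcls :: "nat \<Rightarrow> int vec" where
  "hcls i = (if i < 3 then unit_vec 3 i else vec 3 (\<lambda>_. -1))"

text \<open>Matrix (columns = images of basis vectors) of the permutation g of {0,1,2,3}:
  g(e_j) = class of h_(g j).\<close>
definition perm_mat :: "(nat \<Rightarrow> nat) \<Rightarrow> int mat" where
  "perm_mat g = mat 3 3 (\<lambda>(i, j). hcls (g j) $ i)"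

text \<open>W_1 = image of S_4 x mu_2 in GL_3(Z); sigma acts as -id.\<close>
definition W1 :: "int mat set" where
  "W1 = {smult_mat s (perm_mat g) | g s. g permutes {0..<4} \<and> s \<in> {1, -1}}"

definition W1A :: "int mat set" where
  "W1A = {perm_mat g | g. g permutes {0..<4} \<and> evenperm g}"

text \<open>A point of T_1 is a homomorphism M_1 -> C^*, determined by its values
  t$0, t$1, t$2 on the basis.\<close>
definition T1_carrier :: "complex vec set" where
  "T1_carrier = {t. dim_vec t = 3 \<and> (\<forall>i<3. t $ i \<noteq> 0)}"

definition T1 :: "complex vec monoid" where
  "T1 = \<lparr>carrier = T1_carrier,
         monoid.mult = (\<lambda>s t. vec 3 (\<lambda>i. s $ i * t $ i)),
         monoid.one = vec 3 (\<lambda>_. 1)\<rparr>"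

text \<open>Action of A in GL(M_1) on T_1 via its action on characters:
  (A.t)(e_j) = t(A e_j) = prod_i t(e_i)^(A_ij).  (Invariance of a subgroup under a
  group W does not depend on whether one uses A or A^{-1} here.)\<close>
definition T1_act :: "int mat \<Rightarrow> complex vec \<Rightarrow> complex vec" where
  "T1_act A t = vec 3 (\<lambda>j. \<Prod>i<3. (t $ i) powi (A $$ (i, j)))"

abbreviation mu :: "nat \<Rightarrow> int monoid" where
  "mu k \<equiv> integer_mod_group k"

end

theory Submission
  imports Defs "HOL-Library.Real_Mod"
begin

(* Evaluating a point t of T1 at h_1, ..., h_4 identifies T1 with the maximal torus
   x_1 x_2 x_3 x_4 = 1 of SL_4, on which W1A = A_4 permutes the coordinates.
   The numbers s for which the coroot point (s, s^-1, 1, 1) lies in G form a finite subgroup mu_m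
   of C^*, and since A_4 is 2-transitive the same holds for every pair of positions; these points
   generate the m-torsion of T1, so it lies in G.  The m-th powers of G form an A_4-invariant
   subgroup without nontrivial coroot points, and products of A_4-translates of a point then force
   each of its elements to be a scalar point (e, e, e, e) with e^4 = 1.  Hence
   G = {t. t^m = (e, e, e, e) for some e \<in> mu_k} with k dividing 4, a group isomorphic to
   mu_km \<times> mu_m \<times> mu_m: only the first, third and fifth alternatives occur, with n = k m. *)

section \<open>The torus T1 and the action of W1A\<close>

lemma T1_carrier [simp]: "carrier T1 = T1_carrier"
  and T1_mult: "x \<otimes>\<^bsub>T1\<^esub> y = vec 3 (\<lambda>i. x $ i * y $ i)"
  and T1_one: "\<one>\<^bsub>T1\<^esub> = vec 3 (\<lambda>_. 1)"
  by (simp_all add: T1_def)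

lemma comm_group_T1: "comm_group T1"
proof (rule comm_groupI)
  fix x assume "x \<in> carrier T1"
  then show "\<exists>y\<in>carrier T1. y \<otimes>\<^bsub>T1\<^esub> x = \<one>\<^bsub>T1\<^esub>"
    unfolding T1_mult T1_one
    by (intro bexI[of _ "vec 3 (\<lambda>i. inverse (x $ i))"]) (auto simp: T1_carrier_def intro!: eq_vecI)
qed (unfold T1_mult T1_one, auto simp: T1_carrier_def mult_ac intro!: eq_vecI)

interpretation T1: comm_group T1
  by (rule comm_group_T1)

lemma T1_inv: "x \<in> T1_carrier \<Longrightarrow> inv\<^bsub>T1\<^esub> x = vec 3 (\<lambda>i. inverse (x $ i))"
  by (rule T1.inv_equality) (auto simp: T1_carrier_def T1_mult T1_one intro!: eq_vecI)

text \<open>\<^term>\<open>hval t i\<close> is the value of t at h_(i+1) (indices shifted as in the definitions of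
  \<^term>\<open>hcls\<close>); in these coordinates \<^term>\<open>perm_mat g\<close> acts by x \<mapsto> x \<circ> g.\<close>
definition hval :: "complex vec \<Rightarrow> nat \<Rightarrow> complex" where
  "hval t i = (if i < 3 then t $ i else inverse (t $ 0 * t $ 1 * t $ 2))"

lemma hval_mult [simp]: "hval (x \<otimes>\<^bsub>T1\<^esub> y) i = hval x i * hval y i"
  by (simp add: hval_def T1_mult inverse_mult_distrib mult_ac)

lemma hval_inv [simp]: "x \<in> T1_carrier \<Longrightarrow> hval (inv\<^bsub>T1\<^esub> x) i = inverse (hval x i)"
  by (simp add: T1_inv hval_def inverse_mult_distrib mult_ac)

lemma hval_one [simp]: "hval \<one>\<^bsub>T1\<^esub> i = 1"
  by (simp add: hval_def T1_one)

lemma hval_pow [simp]: "hval (x [^]\<^bsub>T1\<^esub> (n::nat)) i = hval x i ^ n"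
  by (induction n) simp_all

lemma hval_nonzero: "t \<in> T1_carrier \<Longrightarrow> hval t i \<noteq> 0"
  by (auto simp: hval_def T1_carrier_def)

lemma hval_prod: "t \<in> T1_carrier \<Longrightarrow> hval t 0 * hval t 1 * hval t 2 * hval t 3 = 1"
  by (auto simp: hval_def T1_carrier_def field_simps)

lemma T1_eqI:
  "s \<in> T1_carrier \<Longrightarrow> t \<in> T1_carrier \<Longrightarrow> (\<And>i. i < 3 \<Longrightarrow> hval s i = hval t i) \<Longrightarrow> s = t"
  by (auto simp: hval_def T1_carrier_def intro!: eq_vecI)

lemma T1_act_perm_mat_nth:
  assumes g: "g permutes {0..<4}" and j: "j < 3"
  shows "T1_act (perm_mat g) t $ j = hval t (g j)"
proof -
  have "g j < 4" using g j permutes_in_image by fastforce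
  then consider "g j = 0" | "g j = 1" | "g j = 2" | "g j = 3" by linarith
  then show ?thesis
    using j by cases (simp_all add: T1_act_def perm_mat_def hcls_def hval_def lessThan_nat_numeral
        power_int_minus inverse_mult_distrib mult_ac)
qed

lemma T1_act_perm_mat_carrier:
  "g permutes {0..<4} \<Longrightarrow> t \<in> T1_carrier \<Longrightarrow> T1_act (perm_mat g) t \<in> T1_carrier"
  by (simp add: T1_carrier_def T1_act_def T1_act_perm_mat_nth[symmetric] hval_nonzero)

lemma hval_prod_permutes:
  assumes g: "g permutes {0..<4}" and t: "t \<in> T1_carrier"
  shows "hval t (g 0) * hval t (g 1) * hval t (g 2) * hval t (g 3) = 1"
proof -
  have "(\<Prod>k<4. hval t (g k)) = (\<Prod>k<4. hval t k)"
    using prod.permute[OF g, of "hval t"] by (simp add: lessThan_atLeast0 comp_def)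
  then show ?thesis
    using hval_prod[OF t] by (simp add: lessThan_nat_numeral mult_ac)
qed

lemma hval_T1_act_perm_mat:
  assumes g: "g permutes {0..<4}" and t: "t \<in> T1_carrier" and i: "i < 4"
  shows "hval (T1_act (perm_mat g) t) i = hval t (g i)"
proof (cases "i < 3")
  case True
  then show ?thesis by (simp add: hval_def T1_act_perm_mat_nth[OF g])
next
  case False
  then have "i = 3" using i by simp
  moreover have "hval t (g 3) = inverse (hval t (g 0) * hval t (g 1) * hval t (g 2))"
    using hval_prod_permutes[OF g t] by (metis inverse_unique)
  ultimately show ?thesis by (simp add: hval_def T1_act_perm_mat_nth[OF g])
qed

section \<open>Coroot points\<close>

text \<open>The image of s under the coroot of e_(i+1) - e_(j+1) of SL_4.\<close>
definition coroot :: "nat \<Rightarrow> nat \<Rightarrow> complex \<Rightarrow> complex vec" where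
  "coroot i j s = vec 3 (\<lambda>k. if k = i then s else if k = j then inverse s else 1)"

lemma coroot_carrier_iff:
  assumes "i \<noteq> j" "i < 4" "j < 4"
  shows "coroot i j s \<in> T1_carrier \<longleftrightarrow> s \<noteq> 0"
proof -
  have "i < 3 \<or> j < 3" using assms by linarith
  then show ?thesis by (auto simp: coroot_def T1_carrier_def)
qed

lemma hval_coroot:
  assumes "i \<noteq> j" "i < 4" "j < 4" "k < 4" "s \<noteq> 0"
  shows "hval (coroot i j s) k = (if k = i then s else if k = j then inverse s else 1)"
  using assms by (auto simp: coroot_def hval_def less_Suc_eq numeral_eq_Suc)

lemma coroot_eqI:
  assumes t: "t \<in> T1_carrier" and ij: "i \<noteq> j" "i < 4" "j < 4"
    and others: "\<And>k. k < 4 \<Longrightarrow> k \<noteq> i \<Longrightarrow> k \<noteq> j \<Longrightarrow> hval t k = 1"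
  shows "t = coroot i j (hval t i)"
proof -
  have "(\<Prod>k<4. hval t k) = 1" using hval_prod[OF t] by (simp add: lessThan_nat_numeral mult_ac)
  moreover have "(\<Prod>k<4. hval t k) = hval t i * hval t j"
    using ij others by (simp add: prod.remove[of "{..<4}" i] prod.remove[of "{..<4} - {i}" j] prod.neutral)
  ultimately have "hval t j = inverse (hval t i)" by (metis inverse_unique)
  then show ?thesis using ij others hval_nonzero[OF t]
    by (intro T1_eqI t) (auto simp: coroot_carrier_iff hval_coroot)
qed

lemma T1_act_perm_mat_coroot:
  assumes g: "g permutes {0..<4}" and ij: "i \<noteq> j" "i < 4" "j < 4" and s: "s \<noteq> 0"
  shows "T1_act (perm_mat g) (coroot (g i) (g j) s) = coroot i j s"
proof (rule T1_eqI)
  have gij: "g i \<noteq> g j" "g i < 4" "g j < 4"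
    using ij g permutes_in_image[OF g] by (auto simp: permutes_inj[OF g, THEN inj_eq])
  then show "T1_act (perm_mat g) (coroot (g i) (g j) s) \<in> T1_carrier"
    by (simp add: T1_act_perm_mat_carrier[OF g] coroot_carrier_iff s)
  show "coroot i j s \<in> T1_carrier" using ij s by (simp add: coroot_carrier_iff)
  fix k :: nat assume k: "k < 3"
  then have "g k < 4" using permutes_in_image[OF g] by simp
  then show "hval (T1_act (perm_mat g) (coroot (g i) (g j) s)) k = hval (coroot i j s) k"
    using k ij s gij
    by (simp add: hval_T1_act_perm_mat[OF g] coroot_carrier_iff hval_coroot
        permutes_inj[OF g, THEN inj_eq])
qed

lemma A4_two_transitive:
  assumes ij: "i \<noteq> j" "i < 4" "j < (4::nat)"
  shows "\<exists>g. g permutes {0..<4} \<and> evenperm g \<and> g 0 = i \<and> g 1 = j"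
proof -
  define g where "g = transpose i 0 \<circ> transpose 1 (transpose i 0 j)"
  have "transpose i 0 j < 4" using ij by (simp add: transpose_def)
  then have g: "g permutes {0..<4}" "permutation g"
    using ij by (auto simp: g_def permutation_swap_id intro!: permutes_compose permutes_swap_id permutation_compose)
  have g01: "g 0 = i" "g 1 = j" using ij by (auto simp: g_def transpose_def)
  show ?thesis
  proof (cases "evenperm g")
    case True
    then show ?thesis using g g01 by blast
  next
    case False
    \<comment> \<open>Composing with the transposition of 2 and 3 fixes the images of 0 and 1 and flips the parity.\<close>
    then have "evenperm (g \<circ> transpose 2 3)"
      using g by (simp add: evenperm_comp permutation_swap_id evenperm_swap)
    moreover have "(g \<circ> transpose 2 3) permutes {0..<4}"
      using g by (auto intro!: permutes_compose permutes_swap_id)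
    ultimately show ?thesis using g01 by (intro exI[of _ "g \<circ> transpose 2 3"]) auto
  qed
qed

lemma A4_two_transitive_pairs:
  assumes "i \<noteq> j" "i < 4" "j < 4" "i' \<noteq> j'" "i' < 4" "j' < (4::nat)"
  shows "\<exists>g. g permutes {0..<4} \<and> evenperm g \<and> g i' = i \<and> g j' = j"
proof -
  obtain g where g: "g permutes {0..<4}" "evenperm g" "g 0 = i" "g 1 = j"
    using A4_two_transitive assms by blast
  obtain h where h: "h permutes {0..<4}" "evenperm h" "h 0 = i'" "h 1 = j'"
    using A4_two_transitive assms by blast
  have "permutation g" "permutation (Hilbert_Choice.inv h)"
    using g(1) permutes_inv[OF h(1)] by (auto intro: permutes_imp_permutation)
  then have "evenperm (g \<circ> Hilbert_Choice.inv h)"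
    using g(2) h(2) by (simp add: evenperm_comp evenperm_inv permutes_imp_permutation[OF _ h(1)])
  moreover have "(g \<circ> Hilbert_Choice.inv h) permutes {0..<4}"
    using g(1) h(1) by (simp add: permutes_compose permutes_inv)
  moreover have "(g \<circ> Hilbert_Choice.inv h) i' = i" "(g \<circ> Hilbert_Choice.inv h) j' = j"
    using g(3,4) h(3,4) permutes_inverses(2)[OF h(1)] by (metis comp_apply)+
  ultimately show ?thesis by blast
qed

lemma double_transpose_permutes:
  assumes "a < 4" "b < 4" "c < 4" "d < (4::nat)"
  shows "(transpose a b \<circ> transpose c d) permutes {0..<4}"
  using assms by (auto intro!: permutes_compose permutes_swap_id)

lemma evenperm_double_transpose:
  "a \<noteq> b \<Longrightarrow> c \<noteq> d \<Longrightarrow> evenperm (transpose a b \<circ> transpose c d)"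
  by (simp add: evenperm_comp permutation_swap_id evenperm_swap)

lemma hval_T1_act_double_transpose:
  assumes "a < 4" "b < 4" "c < 4" "d < 4" "t \<in> T1_carrier" "k < 4"
  shows "hval (T1_act (perm_mat (transpose a b \<circ> transpose c d)) t) k
           = hval t ((transpose a b \<circ> transpose c d) k)"
  using assms by (intro hval_T1_act_perm_mat double_transpose_permutes)

section \<open>Subgroups invariant under A_4\<close>

locale A4_invariant_subgroup =
  fixes G :: "complex vec set"
  assumes subgroup: "subgroup G T1"
    and invariant: "\<And>g t. g permutes {0..<4} \<Longrightarrow> evenperm g \<Longrightarrow> t \<in> G \<Longrightarrow> T1_act (perm_mat g) t \<in> G"
begin

lemma mem_carrier: "t \<in> G \<Longrightarrow> t \<in> T1_carrier"
  using subgroup.subset[OF subgroup] by auto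

lemma mult_mem: "s \<in> G \<Longrightarrow> t \<in> G \<Longrightarrow> s \<otimes>\<^bsub>T1\<^esub> t \<in> G"
  and inv_mem: "t \<in> G \<Longrightarrow> inv\<^bsub>T1\<^esub> t \<in> G"
  and one_mem: "\<one>\<^bsub>T1\<^esub> \<in> G"
  by (simp_all add: subgroup.m_closed subgroup.m_inv_closed subgroup.one_closed subgroup)

lemma double_transpose_mem:
  assumes "a \<noteq> b" "c \<noteq> d" "a < 4" "b < 4" "c < 4" "d < 4" "t \<in> G"
  shows "T1_act (perm_mat (transpose a b \<circ> transpose c d)) t \<in> G"
  using assms by (intro invariant double_transpose_permutes evenperm_double_transpose)

lemma coroot_transfer:
  assumes s: "coroot i j s \<in> G" and ij: "i \<noteq> j" "i < 4" "j < 4" and ij': "i' \<noteq> j'" "i' < 4" "j' < 4"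
  shows "coroot i' j' s \<in> G"
proof -
  have "s \<noteq> 0" using mem_carrier[OF s] coroot_carrier_iff[OF ij] by simp
  obtain g where g: "g permutes {0..<4}" "evenperm g" "g i' = i" "g j' = j"
    using A4_two_transitive_pairs[OF ij ij'] by blast
  show ?thesis
    using invariant[OF g(1,2) s] T1_act_perm_mat_coroot[OF g(1) ij' \<open>s \<noteq> 0\<close>] g(3,4) by simp
qed

definition coroot_group :: "complex set" where
  "coroot_group = {s. coroot 0 1 s \<in> G}"

lemma coroot_mem_iff:
  "i \<noteq> j \<Longrightarrow> i < 4 \<Longrightarrow> j < 4 \<Longrightarrow> coroot i j s \<in> G \<longleftrightarrow> s \<in> coroot_group"
  unfolding coroot_group_def using coroot_transfer[of i j s 0 1] coroot_transfer[of 0 1 s i j] by auto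

lemma stabilizer_product:
  assumes t: "t \<in> G"
  obtains b where "b \<in> G" "hval b 0 = hval t 0 ^ 3" "\<And>k. 0 < k \<Longrightarrow> k < 4 \<Longrightarrow> hval b k = inverse (hval t 0)"
proof
  let ?\<sigma> = "transpose 1 2 \<circ> transpose 2 3" and ?\<sigma>' = "transpose 1 3 \<circ> transpose 2 3"
  let ?b = "t \<otimes>\<^bsub>T1\<^esub> T1_act (perm_mat ?\<sigma>) t \<otimes>\<^bsub>T1\<^esub> T1_act (perm_mat ?\<sigma>') t"
  show "?b \<in> G" using t by (intro mult_mem double_transpose_mem) auto
  have tc: "t \<in> T1_carrier" using mem_carrier[OF t] .
  have hb: "hval ?b k = hval t k * hval t (?\<sigma> k) * hval t (?\<sigma>' k)" if "k < 4" for k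
    using that tc by (simp add: hval_T1_act_double_transpose)
  show "hval ?b 0 = hval t 0 ^ 3"
    using hb[of 0] by (simp add: transpose_def power3_eq_cube)
  have prod: "hval t 1 * hval t 2 * hval t 3 = inverse (hval t 0)"
    using hval_prod[OF tc] hval_nonzero[OF tc, of 0] by (simp add: field_simps)
  fix k :: nat assume "0 < k" "k < 4"
  then have "k = 1 \<or> k = 2 \<or> k = 3" by linarith
  then show "hval ?b k = inverse (hval t 0)"
    using hb[OF \<open>k < 4\<close>] prod by (auto simp: transpose_def mult_ac)
qed

context
  assumes coroot_group_trivial: "coroot_group \<subseteq> {1}"
begin

lemma coroot_mem_trivial: "coroot i j s \<in> G \<Longrightarrow> i \<noteq> j \<Longrightarrow> i < 4 \<Longrightarrow> j < 4 \<Longrightarrow> s = 1"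
  using coroot_mem_iff coroot_group_trivial by blast

lemma hval0_pow4: assumes t: "t \<in> G" shows "hval t 0 ^ 4 = 1"
proof -
  let ?\<tau> = "transpose 0 1 \<circ> transpose 2 3" and ?x = "hval t 0"
  obtain b where b: "b \<in> G" "hval b 0 = ?x ^ 3" "\<And>k. 0 < k \<Longrightarrow> k < 4 \<Longrightarrow> hval b k = inverse ?x"
    using stabilizer_product[OF t] by blast
  have bc: "b \<in> T1_carrier" using mem_carrier[OF b(1)] .
  let ?c = "b \<otimes>\<^bsub>T1\<^esub> inv\<^bsub>T1\<^esub> T1_act (perm_mat ?\<tau>) b"
  have "?c \<in> G" using b(1) by (intro mult_mem inv_mem double_transpose_mem) auto
  have x: "?x \<noteq> 0" using hval_nonzero[OF mem_carrier[OF t]] .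
  have b123: "hval b 1 = inverse ?x" "hval b 2 = inverse ?x" "hval b 3 = inverse ?x"
    using b(3) by simp_all
  have act_c: "T1_act (perm_mat ?\<tau>) b \<in> T1_carrier"
    using T1_act_perm_mat_carrier[OF double_transpose_permutes bc] by simp
  have "?c = coroot 0 1 (?x ^ 4)"
  proof (rule T1_eqI)
    show "?c \<in> T1_carrier" using mem_carrier[OF \<open>?c \<in> G\<close>] .
    show "coroot 0 1 (?x ^ 4) \<in> T1_carrier" using x by (simp add: coroot_carrier_iff)
    fix k :: nat assume "k < 3"
    then have "k = 0 \<or> k = 1 \<or> k = 2" by linarith
    then show "hval ?c k = hval (coroot 0 1 (?x ^ 4)) k"
      using b(2) b123 x bc act_c
      by (auto simp: hval_T1_act_double_transpose hval_coroot transpose_def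
          eval_nat_numeral inverse_mult_distrib)
  qed
  then show ?thesis using coroot_mem_trivial[of 0 1] \<open>?c \<in> G\<close> by simp
qed

lemma hval1_sq:
  assumes t: "t \<in> G" and t0: "hval t 0 = 1"
  shows "hval t 1 ^ 2 = 1"
proof -
  let ?\<tau> = "transpose 0 1 \<circ> transpose 2 3" and ?\<rho> = "transpose 0 1 \<circ> transpose 1 2"
    and ?x = "hval t 1"
  have tc: "t \<in> T1_carrier" using mem_carrier[OF t] .
  have x: "?x \<noteq> 0" using hval_nonzero[OF tc] .
  have x23: "hval t 2 * hval t 3 = inverse ?x"
    using hval_prod[OF tc] t0 x by (simp add: field_simps)
  let ?p = "t \<otimes>\<^bsub>T1\<^esub> T1_act (perm_mat ?\<tau>) t"
  have p: "?p \<in> G" using t by (intro mult_mem double_transpose_mem) auto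
  have pc: "?p \<in> T1_carrier" using mem_carrier[OF p] .
  have hp: "hval ?p 0 = ?x" "hval ?p 1 = ?x" "hval ?p 2 = inverse ?x" "hval ?p 3 = inverse ?x"
    using tc t0 x23 by (simp_all add: hval_T1_act_double_transpose transpose_def mult_ac)
  let ?q = "?p \<otimes>\<^bsub>T1\<^esub> T1_act (perm_mat ?\<rho>) ?p"
  have "?q \<in> G" by (rule mult_mem[OF p double_transpose_mem[OF _ _ _ _ _ _ p]]) auto
  moreover have "?q = coroot 0 3 (?x ^ 2)"
  proof (rule T1_eqI)
    show "?q \<in> T1_carrier" using mem_carrier[OF \<open>?q \<in> G\<close>] .
    show "coroot 0 3 (?x ^ 2) \<in> T1_carrier" using x by (simp add: coroot_carrier_iff)
    fix k :: nat assume "k < 3"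
    then have "k = 0 \<or> k = 1 \<or> k = 2" by linarith
    then show "hval ?q k = hval (coroot 0 3 (?x ^ 2)) k"
      using hp x pc by (auto simp: hval_T1_act_double_transpose hval_coroot transpose_def power2_eq_square)
  qed
  ultimately show ?thesis using coroot_mem_trivial[of 0 3] by simp
qed

lemma hval_eq_1_if_others_eq_1:
  assumes t: "t \<in> G" and ij: "i \<noteq> j" "i < 4" "j < 4"
    and others: "\<And>k. k < 4 \<Longrightarrow> k \<noteq> i \<Longrightarrow> k \<noteq> j \<Longrightarrow> hval t k = 1"
  shows "hval t i = 1"
  using coroot_mem_trivial[OF _ ij] coroot_eqI[OF mem_carrier[OF t] ij others] t by auto

lemma hval_sq_if_hval0_eq_1:
  assumes t: "t \<in> G" and t0: "hval t 0 = 1" and k: "k \<in> {1, 2, 3}"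
  shows "hval t k ^ 2 = 1"
proof -
  let ?\<sigma> = "transpose 1 2 \<circ> transpose 2 3" and ?\<sigma>' = "transpose 1 3 \<circ> transpose 2 3"
  have tc: "t \<in> T1_carrier" using mem_carrier[OF t] .
  have "hval (T1_act (perm_mat ?\<sigma>) t) 1 ^ 2 = 1" "hval (T1_act (perm_mat ?\<sigma>') t) 1 ^ 2 = 1"
    by (rule hval1_sq; use t t0 tc in \<open>simp add: double_transpose_mem hval_T1_act_double_transpose transpose_def\<close>)+
  then show ?thesis
    using k hval1_sq[OF t t0] tc by (auto simp: hval_T1_act_double_transpose transpose_def)
qed

lemma hval_eq_1_if_hval0_eq_1:
  assumes t: "t \<in> G" and t0: "hval t 0 = 1" and k: "k < 4"
  shows "hval t k = 1"
proof -
  have pm: "hval t k = 1 \<or> hval t k = -1" if "k \<in> {1, 2, 3}" for k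
    using hval_sq_if_hval0_eq_1[OF t t0 that] power2_eq_1_iff by blast
  have prod: "hval t 1 * hval t 2 * hval t 3 = 1" using hval_prod[OF mem_carrier[OF t]] t0 by simp
  have four: "k = 0 \<or> k = 1 \<or> k = 2 \<or> k = 3" if "k < 4" for k :: nat
    using that by auto
  have t1: "hval t 1 = 1"
  proof (rule ccontr)
    assume "hval t 1 \<noteq> 1"
    then have "hval t 1 = -1" using pm by blast
    then have "hval t 2 = 1 \<and> hval t 3 = -1 \<or> hval t 2 = -1 \<and> hval t 3 = 1"
      using pm[of 2] pm[of 3] prod by auto
    then have "hval t 1 = 1"
    proof
      assume "hval t 2 = 1 \<and> hval t 3 = -1"
      then show ?thesis using four t0 by (intro hval_eq_1_if_others_eq_1[OF t, of 1 3]; fastforce)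
    next
      assume "hval t 2 = -1 \<and> hval t 3 = 1"
      then show ?thesis using four t0 by (intro hval_eq_1_if_others_eq_1[OF t, of 1 2]; fastforce)
    qed
    with \<open>hval t 1 = -1\<close> show False by simp
  qed
  then have t2: "hval t 2 = 1"
    using four t0 by (intro hval_eq_1_if_others_eq_1[OF t, of 2 3]; fastforce)
  then have "hval t 3 = 1" using prod t1 by simp
  then show ?thesis using four[OF k] t0 t1 t2 by auto
qed

lemma hval_eq_hval0:
  assumes t: "t \<in> G" and k: "k < 4"
  shows "hval t k = hval t 0"
proof -
  obtain b where b: "b \<in> G" "hval b 0 = hval t 0 ^ 3" "\<And>k. 0 < k \<Longrightarrow> k < 4 \<Longrightarrow> hval b k = inverse (hval t 0)"
    using stabilizer_product[OF t] by blast
  have "hval (t \<otimes>\<^bsub>T1\<^esub> b) 0 = hval t 0 ^ 4"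
    using b(2) by (simp add: eval_nat_numeral)
  then have "hval (t \<otimes>\<^bsub>T1\<^esub> b) k = 1"
    using hval0_pow4[OF t] by (intro hval_eq_1_if_hval0_eq_1[OF mult_mem[OF t b(1)] _ k]) simp
  then show ?thesis
    using b(3)[of k] k hval_nonzero[OF mem_carrier[OF t], of 0] by (cases "k = 0") (auto simp: field_simps)
qed

end

end

section \<open>Points whose m-th power is scalar\<close>

definition unity_root :: "nat \<Rightarrow> int \<Rightarrow> complex" where
  "unity_root N a = cis (2 * pi * of_int a / real N)"

lemma unity_root_add: "unity_root N (a + b) = unity_root N a * unity_root N b"
  by (simp add: unity_root_def cis_mult add_divide_distrib distrib_left)

lemma unity_root_pow: "unity_root N a ^ n = unity_root N (int n * a)"
  by (simp add: unity_root_def DeMoivre mult_ac)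

lemma unity_root_nonzero: "unity_root N a \<noteq> 0"
  by (simp add: unity_root_def)

lemma unity_root_eq_1_iff:
  assumes "N > 0" shows "unity_root N a = 1 \<longleftrightarrow> int N dvd a"
proof -
  have "unity_root N a = 1 \<longleftrightarrow> (\<exists>n::int. of_int a = real N * of_int n)"
    using assms by (simp add: unity_root_def cis_eq_1_iff field_simps)
  also have "\<dots> \<longleftrightarrow> int N dvd a"
    by (metis dvd_def of_int_eq_iff of_int_mult of_int_of_nat_eq)
  finally show ?thesis .
qed

lemma unity_root_eq_iff:
  assumes "N > 0" shows "unity_root N a = unity_root N b \<longleftrightarrow> a mod int N = b mod int N"
proof -
  have "unity_root N a = unity_root N (a - b) * unity_root N b"
    by (simp flip: unity_root_add)
  then have "unity_root N a = unity_root N b \<longleftrightarrow> unity_root N (a - b) = 1"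
    using unity_root_nonzero[of N b] by auto
  then show ?thesis using assms by (simp add: unity_root_eq_1_iff mod_eq_dvd_iff)
qed

lemma unity_root_cong: "a mod int N = b mod int N \<Longrightarrow> unity_root N a = unity_root N b"
  by (cases "N = 0") (simp_all add: unity_root_eq_iff)

lemma roots_unity_eq_unity_root:
  assumes "N > 0" "z ^ N = 1"
  obtains a where "a \<in> {0..<int N}" "z = unity_root N a"
proof -
  obtain k where "k < N" "z = cis (2 * pi * real k / real N)"
    using bij_betw_imp_surj_on[OF bij_betw_roots_unity[OF assms(1)]] assms(2) by blast
  then show ?thesis by (intro that[of "int k"]) (auto simp: unity_root_def)
qed

definition scalar_power_group :: "nat \<Rightarrow> nat \<Rightarrow> complex vec set" where
  "scalar_power_group k m = {t \<in> T1_carrier. \<exists>e. e ^ k = 1 \<and> (\<forall>i<3. t $ i ^ m = e)}"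

definition root_param :: "nat \<Rightarrow> nat \<Rightarrow> int \<times> int \<times> int \<Rightarrow> complex vec" where
  "root_param k m = (\<lambda>(u, v, w). vec 3 (\<lambda>i. unity_root (k * m) (u + int k * [v, w, 0] ! i)))"

lemma root_param_mem:
  assumes "k > 0" "m > 0"
  shows "root_param k m x \<in> scalar_power_group k m"
proof -
  obtain u v w where x: "x = (u, v, w)" by (cases x)
  have pow_m: "unity_root (k * m) (u + int k * c) ^ m = unity_root (k * m) (int m * u)" for c
  proof -
    have "(int m * (u + int k * c)) mod int (k * m) = (int m * u) mod int (k * m)"
      by (simp add: algebra_simps)
    then show ?thesis unfolding unity_root_pow by (rule unity_root_cong)
  qed
  have "unity_root (k * m) (int m * u) ^ k = 1"
    using assms by (simp add: unity_root_pow unity_root_eq_1_iff)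
  then show ?thesis
    using pow_m by (auto simp: scalar_power_group_def T1_carrier_def root_param_def x unity_root_nonzero)
qed

lemma unity_root_shift_cancel:
  assumes "k > 0" "m > 0" "unity_root (k * m) (u + int k * c) = unity_root (k * m) (u + int k * c')"
  shows "c mod int m = c' mod int m"
proof -
  have "int k * int m dvd int k * (c - c')"
    using assms by (simp add: unity_root_eq_iff mod_eq_dvd_iff algebra_simps)
  then show ?thesis using assms(1) by (simp add: mod_eq_dvd_iff)
qed

lemma root_param_mult:
  assumes "k > 0" "m > 0"
  shows "root_param k m (x \<otimes>\<^bsub>mu (k * m) \<times>\<times> mu m \<times>\<times> mu m\<^esub> y)
           = vec 3 (\<lambda>i. root_param k m x $ i * root_param k m y $ i)"
proof -
  obtain u1 v1 w1 u2 v2 w2 where xy: "x = (u1, v1, w1)" "y = (u2, v2, w2)"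
    by (cases x, cases y) auto
  have "((u1 + u2) mod int (k * m) + int k * ((c1 + c2) mod int m)) mod int (k * m)
          = (u1 + int k * c1 + (u2 + int k * c2)) mod int (k * m)" for c1 c2
  proof -
    have "int k * ((c1 + c2) mod int m) = (int k * (c1 + c2)) mod int (k * m)"
      by (simp add: mod_mult_mult1)
    then show ?thesis by (simp add: mod_add_eq algebra_simps)
  qed
  then have "unity_root (k * m) ((u1 + u2) mod int (k * m) + int k * ((c1 + c2) mod int m))
      = unity_root (k * m) (u1 + int k * c1) * unity_root (k * m) (u2 + int k * c2)" for c1 c2
    unfolding unity_root_add[symmetric] by (rule unity_root_cong)
  moreover have "[(v1 + v2) mod int m, (w1 + w2) mod int m, 0] ! i
      = ([v1, w1, 0] ! i + [v2, w2, 0] ! i) mod int m" if "i < 3" for i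
    using that by (auto simp: less_Suc_eq numeral_eq_Suc)
  ultimately show ?thesis
    by (auto simp: root_param_def xy intro!: eq_vecI)
qed

lemma root_param_inj:
  assumes "k > 0" "m > 0"
  shows "inj_on (root_param k m) (carrier (mu (k * m) \<times>\<times> mu m \<times>\<times> mu m))"
proof (rule inj_onI)
  fix x y assume "x \<in> carrier (mu (k * m) \<times>\<times> mu m \<times>\<times> mu m)" "y \<in> carrier (mu (k * m) \<times>\<times> mu m \<times>\<times> mu m)"
    and eq: "root_param k m x = root_param k m y"
  moreover obtain u1 v1 w1 u2 v2 w2 where xy: "x = (u1, v1, w1)" "y = (u2, v2, w2)"
    by (cases x, cases y) auto
  ultimately have range: "u1 \<in> {0..<int (k * m)}" "u2 \<in> {0..<int (k * m)}"
      "v1 \<in> {0..<int m}" "v2 \<in> {0..<int m}" "w1 \<in> {0..<int m}" "w2 \<in> {0..<int m}"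
    using assms by (simp_all add: carrier_integer_mod_group)
  have coord: "unity_root (k * m) (u1 + int k * [v1, w1, 0] ! i) = unity_root (k * m) (u2 + int k * [v2, w2, 0] ! i)"
    if "i < 3" for i
    using arg_cong[OF eq, of "\<lambda>t. t $ i"] that by (simp add: root_param_def xy)
  have "u1 mod int (k * m) = u2 mod int (k * m)"
    using coord[of 2] assms by (simp add: unity_root_eq_iff)
  then have u: "u1 = u2" using range by simp
  have "v1 mod int m = v2 mod int m" "w1 mod int m = w2 mod int m"
    using coord[of 0] coord[of 1] assms u by (auto intro: unity_root_shift_cancel)
  then show "x = y" using range u xy by simp
qed

lemma unity_root_shift_mod:
  "unity_root (k * m) (u + int k * (c mod int m)) = unity_root (k * m) (u + int k * c)"
proof (rule unity_root_cong)
  have "int k * (c mod int m) = (int k * c) mod int (k * m)"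
    by (simp add: mod_mult_mult1)
  then show "(u + int k * (c mod int m)) mod int (k * m) = (u + int k * c) mod int (k * m)"
    by (metis mod_add_right_eq)
qed

lemma root_param_surj:
  assumes k: "k > 0" and m: "m > 0" and t: "t \<in> scalar_power_group k m"
  shows "t \<in> root_param k m ` carrier (mu (k * m) \<times>\<times> mu m \<times>\<times> mu m)"
proof -
  obtain e where tc: "t \<in> T1_carrier" and e: "e ^ k = 1" and te: "\<And>i. i < 3 \<Longrightarrow> t $ i ^ m = e"
    using t by (auto simp: scalar_power_group_def)
  have "\<exists>a. i < 3 \<longrightarrow> a \<in> {0..<int (k * m)} \<and> t $ i = unity_root (k * m) a" for i
  proof (cases "i < 3")
    case True
    have "k * m > 0" using k m by simp
    moreover have "t $ i ^ (k * m) = 1" using te[OF True] e by (metis power_mult mult.commute)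
    ultimately show ?thesis by (rule roots_unity_eq_unity_root) blast
  qed simp
  then obtain a where a: "\<And>i. i < 3 \<Longrightarrow> a i \<in> {0..<int (k * m)} \<and> t $ i = unity_root (k * m) (a i)"
    using choice[of "\<lambda>i a. i < 3 \<longrightarrow> a \<in> {0..<int (k * m)} \<and> t $ i = unity_root (k * m) a"] by blast
  \<comment> \<open>All coordinates have the same m-th power e, so their exponents agree modulo k.\<close>
  have "int k dvd a i - a 2" if "i < 3" for i
  proof -
    have "unity_root (m * k) (0 + int m * a i) = unity_root (m * k) (0 + int m * a 2)"
      using te[OF that] te[of 2] a[OF that] a[of 2] by (simp add: unity_root_pow mult.commute)
    then have "a i mod int k = a 2 mod int k" by (rule unity_root_shift_cancel[OF m k])
    then show ?thesis by (simp add: mod_eq_dvd_iff)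
  qed
  then have q: "a i = a 2 + int k * ((a i - a 2) div int k)" if "i < 3" for i
    using that by simp
  let ?q = "\<lambda>i. (a i - a 2) div int k"
  let ?x = "(a 2, ?q 0 mod int m, ?q 1 mod int m)"
  have "?x \<in> carrier (mu (k * m) \<times>\<times> mu m \<times>\<times> mu m)"
    using a[of 2] k m by (simp add: carrier_integer_mod_group)
  moreover have "root_param k m ?x = t"
  proof (rule eq_vecI)
    fix i assume "i < dim_vec t"
    then have "i = 0 \<or> i = 1 \<or> i = 2" using tc by (auto simp: T1_carrier_def)
    then show "root_param k m ?x $ i = t $ i"
      using a q[of 0] q[of 1] by (auto simp: root_param_def unity_root_shift_mod simp del: of_nat_mult)
  qed (use tc in \<open>simp add: root_param_def T1_carrier_def\<close>)
  ultimately show ?thesis by blast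
qed

lemma scalar_power_group_iso:
  assumes "k > 0" "m > 0"
  shows "T1\<lparr>carrier := scalar_power_group k m\<rparr> \<cong> mu (k * m) \<times>\<times> mu m \<times>\<times> mu m"
proof -
  have "root_param k m \<in> hom (mu (k * m) \<times>\<times> mu m \<times>\<times> mu m) (T1\<lparr>carrier := scalar_power_group k m\<rparr>)"
    using root_param_mem[OF assms] by (intro homI) (simp_all add: root_param_mult[OF assms] T1_mult)
  moreover have "bij_betw (root_param k m) (carrier (mu (k * m) \<times>\<times> mu m \<times>\<times> mu m)) (scalar_power_group k m)"
    using root_param_inj[OF assms] root_param_mem[OF assms] root_param_surj[OF assms]
    by (auto simp: bij_betw_def)
  ultimately have "root_param k m \<in> iso (mu (k * m) \<times>\<times> mu m \<times>\<times> mu m) (T1\<lparr>carrier := scalar_power_group k m\<rparr>)"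
    by (simp add: iso_def)
  then have "mu (k * m) \<times>\<times> mu m \<times>\<times> mu m \<cong> T1\<lparr>carrier := scalar_power_group k m\<rparr>"
    by (rule is_isoI)
  then show ?thesis by (simp add: group.iso_sym DirProd_group)
qed

section \<open>Finite subgroups invariant under A_4\<close>

lemma finite_mult_closed_eq_roots_unity:
  fixes K :: "complex set"
  assumes fin: "finite K" and one: "1 \<in> K" and nz: "0 \<notin> K"
    and mult: "\<And>x y. x \<in> K \<Longrightarrow> y \<in> K \<Longrightarrow> x * y \<in> K"
  shows "K = {z. z ^ card K = 1}" and "card K > 0"
proof -
  show pos: "card K > 0" using fin one card_gt_0_iff by blast
  \<comment> \<open>Multiplication by s permutes K, so s to the power card K times the product of K is that product.\<close>
  have "s ^ card K = 1" if s: "s \<in> K" for s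
  proof -
    have inj: "inj_on ((*) s) K" using s nz by (auto simp: inj_on_def)
    have "(*) s ` K = K"
      by (rule endo_inj_surj[OF fin _ inj]) (use mult s in auto)
    then have "prod (\<lambda>x. x) K = prod (\<lambda>x. x) ((*) s ` K)" by simp
    also have "\<dots> = prod ((*) s) K" by (simp add: prod.reindex[OF inj])
    also have "\<dots> = s ^ card K * prod (\<lambda>x. x) K" by (simp add: prod.distrib)
    finally have "s ^ card K * prod (\<lambda>x. x) K = 1 * prod (\<lambda>x. x) K" by simp
    moreover have "prod (\<lambda>x. x) K \<noteq> 0" using fin nz by (auto simp: prod_zero_iff)
    ultimately show ?thesis by (metis mult_cancel_right)
  qed
  then have sub: "K \<subseteq> {z. z ^ card K = 1}" by auto
  have "1 \<le> card K" using pos by simp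
  note roots = finite_roots_unity[OF this, where 'a = complex] card_roots_unity[OF this, where 'a = complex]
  show "K = {z. z ^ card K = 1}"
    using card_subset_eq[OF roots(1) sub] card_mono[OF roots(1) sub] roots(2) by simp
qed

lemma T1_act_perm_mat_pow:
  fixes n :: nat
  assumes g: "g permutes {0..<4}" and t: "t \<in> T1_carrier"
  shows "T1_act (perm_mat g) (t [^]\<^bsub>T1\<^esub> n) = T1_act (perm_mat g) t [^]\<^bsub>T1\<^esub> n"
proof (rule T1_eqI)
  show "T1_act (perm_mat g) (t [^]\<^bsub>T1\<^esub> n) \<in> T1_carrier"
    using T1.nat_pow_closed[of t n] t by (simp add: T1_act_perm_mat_carrier[OF g])
  show "T1_act (perm_mat g) t [^]\<^bsub>T1\<^esub> n \<in> T1_carrier"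
    using T1.nat_pow_closed[of _ n] T1_act_perm_mat_carrier[OF g t] by simp
  fix i :: nat assume "i < 3"
  then show "hval (T1_act (perm_mat g) (t [^]\<^bsub>T1\<^esub> n)) i = hval (T1_act (perm_mat g) t [^]\<^bsub>T1\<^esub> n) i"
    using g t T1.nat_pow_closed[of t n] by (simp add: hval_T1_act_perm_mat)
qed

lemma coroot_decomposition:
  assumes t: "t \<in> T1_carrier"
  shows "t = coroot 0 3 (t $ 0) \<otimes>\<^bsub>T1\<^esub> (coroot 1 3 (t $ 1) \<otimes>\<^bsub>T1\<^esub> coroot 2 3 (t $ 2))"
proof (rule eq_vecI)
  fix i assume "i < dim_vec (coroot 0 3 (t $ 0) \<otimes>\<^bsub>T1\<^esub> (coroot 1 3 (t $ 1) \<otimes>\<^bsub>T1\<^esub> coroot 2 3 (t $ 2)))"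
  then have "i = 0 \<or> i = 1 \<or> i = 2" by (auto simp: T1_mult)
  then show "t $ i = (coroot 0 3 (t $ 0) \<otimes>\<^bsub>T1\<^esub> (coroot 1 3 (t $ 1) \<otimes>\<^bsub>T1\<^esub> coroot 2 3 (t $ 2))) $ i"
    by (auto simp: coroot_def T1_mult)
qed (use t in \<open>simp add: T1_carrier_def T1_mult\<close>)

context A4_invariant_subgroup
begin

lemma mem_if_mult_mem:
  assumes "s \<otimes>\<^bsub>T1\<^esub> t \<in> G" "t \<in> G" "s \<in> T1_carrier"
  shows "s \<in> G"
proof -
  have "s = s \<otimes>\<^bsub>T1\<^esub> t \<otimes>\<^bsub>T1\<^esub> inv\<^bsub>T1\<^esub> t"
    using T1.inv_solve_right[of s "s \<otimes>\<^bsub>T1\<^esub> t" t] assms(3) mem_carrier[OF assms(1)]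
      mem_carrier[OF assms(2)] by simp
  then show ?thesis using assms by (metis mult_mem inv_mem)
qed

lemma A4_invariant_subgroup_pow_image:
  fixes n :: nat
  shows "A4_invariant_subgroup ((\<lambda>t. t [^]\<^bsub>T1\<^esub> n) ` G)"
proof (rule A4_invariant_subgroup.intro)
  have "(\<lambda>t. t [^]\<^bsub>T1\<^esub> n) \<in> hom T1 T1"
    by (rule homI) (use T1.nat_pow_closed in \<open>simp_all add: T1.nat_pow_distrib\<close>)
  then have "group_hom T1 T1 (\<lambda>t. t [^]\<^bsub>T1\<^esub> n)"
    by (simp add: group_hom_def group_hom_axioms_def T1.is_group)
  then show "subgroup ((\<lambda>t. t [^]\<^bsub>T1\<^esub> n) ` G) T1"
    using group_hom.subgroup_img_is_subgroup subgroup by blast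
  fix g :: "nat \<Rightarrow> nat" and t
  assume g: "g permutes {0..<4}" "evenperm g" and "t \<in> (\<lambda>t. t [^]\<^bsub>T1\<^esub> n) ` G"
  then obtain s where s: "s \<in> G" "t = s [^]\<^bsub>T1\<^esub> n" by blast
  then show "T1_act (perm_mat g) t \<in> (\<lambda>t. t [^]\<^bsub>T1\<^esub> n) ` G"
    using T1_act_perm_mat_pow[OF g(1) mem_carrier[OF s(1)]] invariant[OF g s(1)] by simp
qed

end

locale finite_A4_invariant_subgroup = A4_invariant_subgroup +
  assumes finite: "finite G"
begin

definition coroot_order :: nat where
  "coroot_order = card coroot_group"

lemma coroot_group_eq: "coroot_group = {z. z ^ coroot_order = 1}"
  and coroot_order_pos: "coroot_order > 0"
proof -
  have "coroot_group \<subseteq> (\<lambda>t. t $ 0) ` G"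
    by (force simp: coroot_group_def coroot_def)
  then have fin: "finite coroot_group" using finite finite_subset by blast
  have "coroot 0 1 1 = \<one>\<^bsub>T1\<^esub>" by (auto simp: coroot_def T1_one)
  then have one: "1 \<in> coroot_group" using one_mem by (simp add: coroot_group_def)
  have zero: "0 \<notin> coroot_group"
    using mem_carrier coroot_carrier_iff[of 0 1 0] by (auto simp: coroot_group_def)
  have "coroot 0 1 s \<otimes>\<^bsub>T1\<^esub> coroot 0 1 r = coroot 0 1 (s * r)" for s r
    by (auto simp: coroot_def T1_mult intro!: eq_vecI)
  then have mult: "s * r \<in> coroot_group" if "s \<in> coroot_group" "r \<in> coroot_group" for s r
    using mult_mem[of "coroot 0 1 s" "coroot 0 1 r"] that by (simp add: coroot_group_def)
  show "coroot_group = {z. z ^ coroot_order = 1}" "coroot_order > 0"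
    using finite_mult_closed_eq_roots_unity[OF fin one zero mult] by (simp_all add: coroot_order_def)
qed

lemma coroot_mem_if_root:
  "i \<noteq> j \<Longrightarrow> i < 4 \<Longrightarrow> j < 4 \<Longrightarrow> s ^ coroot_order = 1 \<Longrightarrow> coroot i j s \<in> G"
  using coroot_mem_iff[of i j s] coroot_group_eq by simp

lemma torsion_mem:
  assumes t: "t \<in> T1_carrier" and tm: "\<And>i. i < 3 \<Longrightarrow> t $ i ^ coroot_order = 1"
  shows "t \<in> G"
proof -
  have "coroot 0 3 (t $ 0) \<in> G" "coroot 1 3 (t $ 1) \<in> G" "coroot 2 3 (t $ 2) \<in> G"
    using tm by (simp_all add: coroot_mem_if_root)
  then show ?thesis by (subst coroot_decomposition[OF t]) (intro mult_mem)
qed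

text \<open>If t^m = coroot 0 3 s, then t differs from coroot 0 3 t_0 by an m-torsion point, so
  coroot 0 3 t_0 lies in G and s = t_0^m = 1.\<close>
lemma pow_image_coroot_group_trivial:
  "A4_invariant_subgroup.coroot_group ((\<lambda>t. t [^]\<^bsub>T1\<^esub> coroot_order) ` G) \<subseteq> {1}"
proof
  interpret P: A4_invariant_subgroup "(\<lambda>t. t [^]\<^bsub>T1\<^esub> coroot_order) ` G"
    by (rule A4_invariant_subgroup_pow_image)
  fix s assume "s \<in> P.coroot_group"
  then have "coroot 0 3 s \<in> (\<lambda>t. t [^]\<^bsub>T1\<^esub> coroot_order) ` G"
    using P.coroot_mem_iff[of 0 3 s] by simp
  then obtain t where t: "t \<in> G" "coroot 0 3 s = t [^]\<^bsub>T1\<^esub> coroot_order" by blast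
  have "s \<noteq> 0"
    using P.mem_carrier \<open>coroot 0 3 s \<in> _\<close> coroot_carrier_iff[of 0 3 s] by auto
  have tc: "t \<in> T1_carrier" using mem_carrier[OF t(1)] .
  have "t $ k ^ coroot_order = hval (coroot 0 3 s) k" if "k < 3" for k
    using that hval_pow[of t coroot_order k] by (simp add: t(2) hval_def)
  then have pow: "t $ 0 ^ coroot_order = s" "t $ 1 ^ coroot_order = 1" "t $ 2 ^ coroot_order = 1"
    using \<open>s \<noteq> 0\<close> by (simp_all add: hval_coroot)
  have "coroot 1 3 (t $ 1) \<otimes>\<^bsub>T1\<^esub> coroot 2 3 (t $ 2) \<in> G"
    using pow by (simp add: mult_mem coroot_mem_if_root)
  moreover have "coroot 0 3 (t $ 0) \<in> T1_carrier"
    using tc coroot_carrier_iff[of 0 3 "t $ 0"] by (simp add: T1_carrier_def)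
  ultimately have "coroot 0 3 (t $ 0) \<in> G"
    using coroot_decomposition[OF tc] t(1) by (metis mem_if_mult_mem)
  then have "t $ 0 ^ coroot_order = 1"
    using coroot_mem_iff[of 0 3] coroot_group_eq by simp
  then show "s \<in> {1}" using pow by simp
qed

lemma hval_pow_coroot_order_eq:
  assumes "t \<in> G" "k < 4"
  shows "hval t k ^ coroot_order = hval t 0 ^ coroot_order"
  using A4_invariant_subgroup.hval_eq_hval0[OF A4_invariant_subgroup_pow_image
      pow_image_coroot_group_trivial, of "t [^]\<^bsub>T1\<^esub> coroot_order" k] assms
  by simp

lemma hval0_pow_coroot_order_pow4:
  assumes "t \<in> G"
  shows "(hval t 0 ^ coroot_order) ^ 4 = 1"
  using A4_invariant_subgroup.hval0_pow4[OF A4_invariant_subgroup_pow_image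
      pow_image_coroot_group_trivial, of "t [^]\<^bsub>T1\<^esub> coroot_order"] assms
  by simp

definition scalar_group :: "complex set" where
  "scalar_group = (\<lambda>t. hval t 0 ^ coroot_order) ` G"

lemma scalar_group_eq: "scalar_group = {z. z ^ card scalar_group = 1}"
  and card_scalar_group_pos: "card scalar_group > 0"
proof -
  have fin: "finite scalar_group" using finite by (simp add: scalar_group_def)
  have one: "1 \<in> scalar_group"
    using one_mem hval_one by (force simp: scalar_group_def)
  have zero: "0 \<notin> scalar_group"
    using mem_carrier hval_nonzero coroot_order_pos by (auto simp: scalar_group_def)
  have mult: "x * y \<in> scalar_group" if xy: "x \<in> scalar_group" "y \<in> scalar_group" for x y
  proof -
    obtain s where "s \<in> G" "x = hval s 0 ^ coroot_order"
      using xy(1) unfolding scalar_group_def by blast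
    moreover obtain t where "t \<in> G" "y = hval t 0 ^ coroot_order"
      using xy(2) unfolding scalar_group_def by blast
    ultimately show ?thesis
      using mult_mem[of s t] by (force simp: scalar_group_def power_mult_distrib)
  qed
  show "scalar_group = {z. z ^ card scalar_group = 1}" "card scalar_group > 0"
    using finite_mult_closed_eq_roots_unity[OF fin one zero mult] by simp_all
qed

lemma card_scalar_group_dvd_4: "card scalar_group dvd 4"
proof -
  let ?k = "card scalar_group"
  have "unity_root ?k 1 ^ ?k = 1"
    using card_scalar_group_pos by (simp add: unity_root_pow unity_root_eq_1_iff)
  then have "unity_root ?k 1 \<in> scalar_group" using scalar_group_eq by blast
  then obtain t where "t \<in> G" "unity_root ?k 1 = hval t 0 ^ coroot_order"
    by (auto simp: scalar_group_def)
  then have "unity_root ?k 4 = 1"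
    using hval0_pow_coroot_order_pow4 unity_root_pow[of ?k 1 4] by simp
  then show ?thesis
    using card_scalar_group_pos unity_root_eq_1_iff by (metis int_dvd_int_iff of_nat_numeral)
qed

lemma eq_scalar_power_group: "G = scalar_power_group (card scalar_group) coroot_order"
proof (intro equalityI subsetI)
  fix t assume t: "t \<in> G"
  have "(hval t 0 ^ coroot_order) ^ card scalar_group = 1"
    using t scalar_group_eq by (auto simp: scalar_group_def)
  moreover have "t $ i ^ coroot_order = hval t 0 ^ coroot_order" if "i < 3" for i
    using hval_pow_coroot_order_eq[OF t, of i] that by (simp add: hval_def)
  ultimately show "t \<in> scalar_power_group (card scalar_group) coroot_order"
    using mem_carrier[OF t] by (auto simp: scalar_power_group_def)
next
  fix t assume "t \<in> scalar_power_group (card scalar_group) coroot_order"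
  then obtain e where tc: "t \<in> T1_carrier" and e: "e ^ card scalar_group = 1"
    and te: "\<And>i. i < 3 \<Longrightarrow> t $ i ^ coroot_order = e"
    by (auto simp: scalar_power_group_def)
  obtain s where s: "s \<in> G" "e = hval s 0 ^ coroot_order"
    using e scalar_group_eq by (auto simp: scalar_group_def)
  have sc: "s \<in> T1_carrier" using mem_carrier[OF s(1)] .
  \<comment> \<open>t and s have the same m-th powers, so t differs from s by an m-torsion point.\<close>
  have "t \<otimes>\<^bsub>T1\<^esub> inv\<^bsub>T1\<^esub> s \<in> G"
  proof (rule torsion_mem)
    show "t \<otimes>\<^bsub>T1\<^esub> inv\<^bsub>T1\<^esub> s \<in> T1_carrier"
      using T1.m_closed[OF _ T1.inv_closed, of t s] tc sc by simp
    fix i :: nat assume i: "i < 3"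
    have "s $ i ^ coroot_order = e"
      using hval_pow_coroot_order_eq[OF s(1), of i] i s(2) by (simp add: hval_def)
    moreover have "s $ i \<noteq> 0" using sc i by (simp add: T1_carrier_def)
    ultimately have "e \<noteq> 0" by auto
    then show "(t \<otimes>\<^bsub>T1\<^esub> inv\<^bsub>T1\<^esub> s) $ i ^ coroot_order = 1"
      using i te[OF i] \<open>s $ i ^ coroot_order = e\<close>
      by (simp add: T1_mult T1_inv[OF sc] power_mult_distrib power_inverse)
  qed
  then show "t \<in> G"
    using mem_if_mult_mem inv_mem[OF s(1)] tc by blast
qed

end

theorem corollary7p2:
  fixes W :: "int mat set" and G :: "complex vec set"
  assumes W_sub: "W \<subseteq> W1"
    and W_sup: "W1A \<subseteq> W"
    and W_mult: "\<forall>A\<in>W. \<forall>B\<in>W. A * B \<in> W"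
    and W_inv: "\<forall>A\<in>W. \<exists>B\<in>W. A * B = 1\<^sub>m 3"
    and G_sub: "subgroup G T1"
    and G_fin: "finite G"
    and G_inv: "\<forall>A\<in>W. \<forall>t\<in>G. T1_act A t \<in> G"
  shows "\<exists>n::nat.
           (T1\<lparr>carrier := G\<rparr> \<cong> mu n \<times>\<times> mu n \<times>\<times> mu n)
         \<or> (even n \<and> T1\<lparr>carrier := G\<rparr> \<cong> mu n \<times>\<times> mu n \<times>\<times> mu (n div 2))
         \<or> (even n \<and> T1\<lparr>carrier := G\<rparr> \<cong> mu n \<times>\<times> mu (n div 2) \<times>\<times> mu (n div 2))
         \<or> (4 dvd n \<and> T1\<lparr>carrier := G\<rparr> \<cong> mu n \<times>\<times> mu (n div 2) \<times>\<times> mu (n div 4))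
         \<or> (4 dvd n \<and> T1\<lparr>carrier := G\<rparr> \<cong> mu n \<times>\<times> mu (n div 4) \<times>\<times> mu (n div 4))"
proof -
  have "A4_invariant_subgroup G"
  proof (rule A4_invariant_subgroup.intro[OF G_sub])
    show "T1_act (perm_mat g) t \<in> G" if "g permutes {0..<4}" "evenperm g" "t \<in> G" for g t
      using W_sup G_inv that by (auto simp: W1A_def)
  qed
  then interpret finite_A4_invariant_subgroup G
    using G_fin by (simp add: finite_A4_invariant_subgroup_def finite_A4_invariant_subgroup_axioms_def)
  let ?k = "card scalar_group" and ?m = coroot_order
  have iso: "T1\<lparr>carrier := G\<rparr> \<cong> mu (?k * ?m) \<times>\<times> mu ?m \<times>\<times> mu ?m"
    using scalar_power_group_iso[OF card_scalar_group_pos coroot_order_pos] eq_scalar_power_group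
    by simp
  have "?k \<in> {1, 2, 3, 4}"
    using dvd_imp_le[OF card_scalar_group_dvd_4] card_scalar_group_pos by auto
  then have "?k = 1 \<or> ?k = 2 \<or> ?k = 4"
    using card_scalar_group_dvd_4 by auto
  then show ?thesis
  proof (elim disjE)
    assume "?k = 1" then show ?thesis using iso by (intro exI[of _ ?m]) simp
  next
    assume "?k = 2" then show ?thesis using iso by (intro exI[of _ "2 * ?m"]) simp
  next
    assume "?k = 4" then show ?thesis using iso by (intro exI[of _ "4 * ?m"]) simp
  qed
qed

end
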